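(* Let $(X,\rho)$ be a metric continuum that is hereditarily indecomposable, and suppose $\{(A_0,B_0),(A_1,B_1)\}$ is an essential family of pairs of disjoint closed subsets of $X$ such that $\rho(x,y)>1$ whenever $x\in A_i$ and $y\in B_i$ ($i=0,1$). Let $\mathcal N$ be a finite collection of pairwise disjoint closed subsets of $X$, each of diameter at most $\tfrac12$. Then there is a continuum in $X$ of diameter at least $1$ that is disjoint from every element of $\mathcal N$.
   Context: A continuum is a compact connected metrizable space; it is hereditarily indecomposable if whenever two subcontinua meet, one contains the other. For disjoint closed $A,B\subseteq X$, a closed set $L$ is a partition between $A$ and $B$ if $X\setminus L=U\cup V$ with $U,V$ disjoint open, $A\subseteq U$, $B\subseteq V$. A family $\{(A_i,B_i)\}$ of pairs of disjoint closed sets is essential if for any choice of partitions $L_i$ between $A_i$ and $B_i$ one has $\bigcap_i L_i\neq\emptyset$. *)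

theory Defs
  imports "HOL-Analysis.Analysis"
begin

definition continuum :: "'a::metric_space set \<Rightarrow> bool" where
  "continuum C \<longleftrightarrow> C \<noteq> {} \<and> compact C \<and> connected C"

definition hereditarily_indecomposable :: "'a::metric_space set \<Rightarrow> bool" where
  "hereditarily_indecomposable X \<longleftrightarrow>
     (\<forall>C D. C \<subseteq> X \<and> D \<subseteq> X \<and> continuum C \<and> continuum D \<and> C \<inter> D \<noteq> {}
        \<longrightarrow> C \<subseteq> D \<or> D \<subseteq> C)"

definition partition_between :: "'a::topological_space set \<Rightarrow> 'a set \<Rightarrow> 'a set \<Rightarrow> 'a set \<Rightarrow> bool" where
  "partition_between X A B L \<longleftrightarrow>
     closedin (top_of_set X) L \<and>
     (\<exists>U V. openin (top_of_set X) U \<and> openin (top_of_set X) V \<and> U \<inter> V = {} \<and>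
            X - L = U \<union> V \<and> A \<subseteq> U \<and> B \<subseteq> V)"

definition essential_family :: "'a::topological_space set \<Rightarrow> 'i set \<Rightarrow> ('i \<Rightarrow> 'a set) \<Rightarrow> ('i \<Rightarrow> 'a set) \<Rightarrow> bool" where
  "essential_family X I A B \<longleftrightarrow>
     (\<forall>L. (\<forall>i\<in>I. partition_between X (A i) (B i) (L i)) \<longrightarrow> X \<inter> (\<Inter>i\<in>I. L i) \<noteq> {})"

end

theory Submission
  imports Defs
begin

text \<open>Since no
  element of \<open>\<N>\<close> meets both \<open>A 0\<close> and \<open>B 0\<close>, the elements of \<open>\<N>\<close> can be absorbed into
  the two sides, giving a partition \<open>L\<^sub>0\<close> between \<open>A 0\<close> and \<open>B 0\<close> that misses every
  element of \<open>\<N>\<close>. Essentiality forces a connected subset of \<open>L\<^sub>0\<close> meeting both \<open>A 1\<close>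
  and \<open>B 1\<close>: otherwise the cut-wire-fence theorem splits the compact set \<open>L\<^sub>0\<close> into
  closed pieces \<open>P \<supseteq> L\<^sub>0 \<inter> A 1\<close> and \<open>Q \<supseteq> L\<^sub>0 \<inter> B 1\<close>, and a partition between \<open>A 1 \<union> P\<close>
  and \<open>B 1 \<union> Q\<close> would be a partition between \<open>A 1\<close> and \<open>B 1\<close> disjoint from \<open>L\<^sub>0\<close>. The
  closure of that connected set is the required continuum.\<close>

lemma partition_between_subset:
  "partition_between X A B L \<Longrightarrow> L \<subseteq> X"
  unfolding partition_between_def by (meson closedin_imp_subset)

lemma partition_between_compact:
  "compact X \<Longrightarrow> partition_between X A B L \<Longrightarrow> compact L"
  unfolding partition_between_def by (meson closedin_compact)

lemma partition_between_disjoint: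
  assumes "partition_between X A B L"
  shows "A \<inter> L = {}" "B \<inter> L = {}"
  using assms unfolding partition_between_def by blast+

lemma partition_between_antimono:
  assumes "partition_between X A' B' L" "A \<subseteq> A'" "B \<subseteq> B'"
  shows "partition_between X A B L"
  using assms unfolding partition_between_def by blast

lemma partition_between_exists:
  fixes X :: "'a::metric_space set"
  assumes "closedin (top_of_set X) A" "closedin (top_of_set X) B" "A \<inter> B = {}"
  obtains L where "partition_between X A B L"
proof -
  have "normal_space (top_of_set X)"
    by (simp add: metrizable_imp_normal_space metrizable_space_subtopology metrizable_space_euclidean)
  then obtain U V where UV: "openin (top_of_set X) U" "openin (top_of_set X) V"
      "A \<subseteq> U" "B \<subseteq> V" "disjnt U V"
    using assms unfolding normal_space_def disjnt_def by metis
  then have "U \<union> V \<subseteq> X"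
    by (meson Un_least openin_imp_subset)
  with UV have "partition_between X A B (X - (U \<union> V))"
    unfolding partition_between_def disjnt_def by (intro conjI exI) auto
  then show thesis
    by (rule that)
qed

lemma partition_between_avoiding_family:
  fixes X :: "'a::metric_space set"
  assumes "closedin (top_of_set X) A" "closedin (top_of_set X) B" "A \<inter> B = {}"
    and "finite \<N>" "\<forall>N\<in>\<N>. closedin (top_of_set X) N" "pairwise disjnt \<N>"
    and "\<forall>N\<in>\<N>. N \<inter> A = {} \<or> N \<inter> B = {}"
  obtains L where "partition_between X A B L" "\<forall>N\<in>\<N>. L \<inter> N = {}"
proof -
  define A' where "A' = A \<union> \<Union>{N\<in>\<N>. N \<inter> A \<noteq> {}}"
  define B' where "B' = B \<union> \<Union>{N\<in>\<N>. N \<inter> A = {}}"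
  have "closedin (top_of_set X) A'" "closedin (top_of_set X) B'"
    unfolding A'_def B'_def using assms(1,2,4,5) by (intro closedin_Un closedin_Union; auto)+
  moreover have "A' \<inter> B' = {}"
    using assms(3,6,7) unfolding A'_def B'_def pairwise_def disjnt_def by blast
  ultimately obtain L where L: "partition_between X A' B' L"
    by (rule partition_between_exists)
  have "partition_between X A B L"
    using L by (rule partition_between_antimono) (auto simp: A'_def B'_def)
  moreover have "\<Union>\<N> \<subseteq> A' \<union> B'"
    unfolding A'_def B'_def by blast
  then have "\<forall>N\<in>\<N>. L \<inter> N = {}"
    using partition_between_disjoint[OF L] by blast
  ultimately show thesis
    by (rule that)
qed

lemma partition_between_avoiding_compact:
  fixes X :: "'a::metric_space set"
  assumes "compact K" "K \<subseteq> X"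
    and A: "closedin (top_of_set X) A" and B: "closedin (top_of_set X) B" and AB: "A \<inter> B = {}"
    and no_link: "\<And>C. connected C \<Longrightarrow> C \<subseteq> K \<Longrightarrow> C \<inter> A = {} \<or> C \<inter> B = {}"
  obtains L where "partition_between X A B L" "L \<inter> K = {}"
proof -
  have K: "closedin (top_of_set X) K"
    using assms(1,2) by (simp add: closed_subset compact_imp_closed)
  have "separated_between (top_of_set K) (K \<inter> A) (K \<inter> B)"
  proof (rule cut_wire_fence_theorem)
    show "compact_space (top_of_set K)" "Hausdorff_space (top_of_set K)"
      by (simp_all add: \<open>compact K\<close> compact_space_subtopology Hausdorff_space_subtopology)
    show "closedin (top_of_set K) (K \<inter> A)" "closedin (top_of_set K) (K \<inter> B)"
      using closedin_Int[OF K A] closedin_Int[OF K B] \<open>K \<subseteq> X\<close>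
      by (meson closedin_subset_trans inf_le1)+
  next
    fix C
    assume "connectedin (top_of_set K) C"
    then show "disjnt C (K \<inter> A) \<or> disjnt C (K \<inter> B)"
      using no_link by (auto simp: connectedin_subtopology disjnt_def)
  qed
  then obtain P Q where PQ: "closedin (top_of_set K) P" "closedin (top_of_set K) Q"
      "P \<union> Q = K" "disjnt P Q" "K \<inter> A \<subseteq> P" "K \<inter> B \<subseteq> Q"
    unfolding separated_between_alt by auto
  have "closedin (top_of_set X) (A \<union> P)" "closedin (top_of_set X) (B \<union> Q)"
    using PQ(1,2) K A B by (meson closedin_Un closedin_trans)+
  moreover have "(A \<union> P) \<inter> (B \<union> Q) = {}"
    using PQ AB by (auto simp: disjnt_def)
  ultimately obtain L where L: "partition_between X (A \<union> P) (B \<union> Q) L"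
    by (rule partition_between_exists)
  show thesis
  proof (rule that)
    show "partition_between X A B L"
      using L by (rule partition_between_antimono) auto
    show "L \<inter> K = {}"
      using partition_between_disjoint[OF L] PQ(3) by blast
  qed
qed

lemma essential_pair_connected_in_partition:
  fixes X :: "'a::metric_space set"
  assumes "compact X" "essential_family X {i, j} A B" "i \<noteq> j"
    and "closedin (top_of_set X) (A j)" "closedin (top_of_set X) (B j)" "A j \<inter> B j = {}"
    and L: "partition_between X (A i) (B i) L"
  obtains C where "connected C" "C \<subseteq> L" "C \<inter> A j \<noteq> {}" "C \<inter> B j \<noteq> {}"
proof -
  have "compact L"
    using \<open>compact X\<close> L by (rule partition_between_compact)
  have "\<exists>C. connected C \<and> C \<subseteq> L \<and> C \<inter> A j \<noteq> {} \<and> C \<inter> B j \<noteq> {}"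
  proof (rule ccontr)
    assume "\<nexists>C. connected C \<and> C \<subseteq> L \<and> C \<inter> A j \<noteq> {} \<and> C \<inter> B j \<noteq> {}"
    then have no_link: "C \<inter> A j = {} \<or> C \<inter> B j = {}" if "connected C" "C \<subseteq> L" for C
      using that by blast
    obtain L' where L': "partition_between X (A j) (B j) L'" "L' \<inter> L = {}"
      using \<open>compact L\<close> partition_between_subset[OF L] assms(4-6) no_link
      by (rule partition_between_avoiding_compact)
    define M where "M k = (if k = i then L else L')" for k
    have "\<forall>k\<in>{i, j}. partition_between X (A k) (B k) (M k)"
      using L L'(1) \<open>i \<noteq> j\<close> by (simp add: M_def)
    then have "X \<inter> (\<Inter>k\<in>{i, j}. M k) \<noteq> {}"
      using assms(2) unfolding essential_family_def by blast
    with L'(2) \<open>i \<noteq> j\<close> show False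
      by (auto simp: M_def)
  qed
  then show thesis
    using that by blast
qed

lemma diameter_less_dist_disjoint:
  fixes N :: "'a::metric_space set"
  assumes "bounded N" "\<forall>a\<in>A. \<forall>b\<in>B. diameter N < dist a b"
  shows "N \<inter> A = {} \<or> N \<inter> B = {}"
  using assms diameter_bounded_bound by fastforce

lemma continuum_closure:
  fixes C :: "'a::metric_space set"
  assumes "connected C" "C \<noteq> {}" "compact K" "C \<subseteq> K"
  shows "continuum (closure C)"
proof -
  have "closure C \<subseteq> K"
    using assms(3,4) by (simp add: closure_minimal compact_imp_closed)
  then have "compact (closure C)"
    using compact_Int_closed[OF assms(3) closed_closure[of C]] by (simp add: Int_absorb1)
  with assms(1,2) show ?thesis
    by (simp add: continuum_def connected_imp_connected_closure)
qed

theorem lemma6p5: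
  fixes X :: "'a::metric_space set"
    and A B :: "nat \<Rightarrow> 'a set"
    and \<N> :: "'a set set"
  assumes "continuum X"
    and "hereditarily_indecomposable X"
    and "\<forall>i\<in>{0,1}. closedin (top_of_set X) (A i) \<and> closedin (top_of_set X) (B i) \<and> A i \<inter> B i = {}"
    and "essential_family X {0,1} A B"
    and "\<forall>i\<in>{0,1}. \<forall>x\<in>A i. \<forall>y\<in>B i. dist x y > 1"
    and "finite \<N>"
    and "\<forall>N\<in>\<N>. closedin (top_of_set X) N \<and> diameter N \<le> 1/2"
    and "pairwise disjnt \<N>"
  shows "\<exists>C. C \<subseteq> X \<and> continuum C \<and> diameter C \<ge> 1 \<and> (\<forall>N\<in>\<N>. C \<inter> N = {})"
proof -
  have "compact X"
    using assms(1) by (simp add: continuum_def)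
  have N_misses_A0_or_B0: "\<forall>N\<in>\<N>. N \<inter> A 0 = {} \<or> N \<inter> B 0 = {}"
  proof
    fix N
    assume "N \<in> \<N>"
    with assms(7) \<open>compact X\<close> have "bounded N" "diameter N < 1"
      by (auto intro: compact_imp_bounded closedin_compact)
    with assms(5) show "N \<inter> A 0 = {} \<or> N \<inter> B 0 = {}"
      by (intro diameter_less_dist_disjoint) (auto intro: less_trans)
  qed
  obtain L where L: "partition_between X (A 0) (B 0) L" and L_avoids: "\<forall>N\<in>\<N>. L \<inter> N = {}"
    by (rule partition_between_avoiding_family[of X "A 0" "B 0" \<N>])
      (use N_misses_A0_or_B0 assms(3,6-8) in auto)
  obtain C where C: "connected C" "C \<subseteq> L" and "C \<inter> A 1 \<noteq> {}" "C \<inter> B 1 \<noteq> {}"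
    by (rule essential_pair_connected_in_partition[of X 0 1 A B L])
      (use \<open>compact X\<close> assms(3,4) L in auto)
  then obtain a b where ab: "a \<in> C" "b \<in> C" "1 < dist a b"
    using assms(5) by blast
  have "compact L" "L \<subseteq> X"
    using \<open>compact X\<close> L by (simp_all add: partition_between_compact partition_between_subset)
  then have "closure C \<subseteq> L" "bounded C"
    using C(2) by (auto simp: closure_minimal compact_imp_closed intro: bounded_subset compact_imp_bounded)
  then have "closure C \<subseteq> X" "\<forall>N\<in>\<N>. closure C \<inter> N = {}"
    using \<open>L \<subseteq> X\<close> L_avoids by blast+
  moreover have "continuum (closure C)"
    using C ab(1) \<open>compact L\<close> by (auto intro: continuum_closure)
  moreover have "1 \<le> diameter (closure C)"
    using ab \<open>bounded C\<close> diameter_bounded_bound[of C a b] by (simp add: diameter_closure)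
  ultimately show ?thesis
    by blast
qed

end
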